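(* Let $(\boldsymbol{x}_i)_{i\geq 0}$ be the two-dimensional Sobol' sequence in $[0,1]^2$, and for $n\geq 1$ let $P_n=(\boldsymbol{x}_i)_{0\leq i<n}$ and $q(P_n)=\frac{1}{2}\min_{0\leq i<j<n}\|\boldsymbol{x}_i-\boldsymbol{x}_j\|$, where $\|\cdot\|$ is the Euclidean norm. If $n=2^{m}-1$ where $m=2^w-1$ for some integer $w>1$, then \[ q(P_n)=\frac{1}{\sqrt{2}(n+1)}. \]
   Context: The two-dimensional Sobol' sequence is defined as follows. For a non-negative integer $n$ with binary expansion $n=n_0+n_1 2+n_2 2^2+\cdots$ ($n_k\in\{0,1\}$, finitely many nonzero), the $n$-th point is $\boldsymbol{x}_n=(x_{n,1},x_{n,2})$ with $x_{n,j}=\sum_{k\geq 1} x_{n,j,k}2^{-k}$, where $(x_{n,j,1},x_{n,j,2},\ldots)^\top = C_j (n_0,n_1,n_2,\ldots)^\top \bmod 2$ (componentwise), for $j=1,2$. The infinite generating matrices $C_1=(c^{(1)}_{i,k})_{i,k\geq 1}$ and $C_2=(c^{(2)}_{i,k})_{i,k\geq1}$ are given by $c^{(1)}_{i,k}=1$ if $i=k$ and $0$ otherwise (identity matrix), and $c^{(2)}_{i,k}=\binom{k-1}{i-1}\bmod 2$ (Pascal matrix over $\mathbb{F}_2$), with the convention $\binom{a}{b}=0$ if $a<b$. The sequence is indexed starting from $\boldsymbol{x}_0$. *)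

theory Defs
  imports "HOL-Analysis.Analysis"
begin

definition digit :: "nat \<Rightarrow> nat \<Rightarrow> nat" where
  "digit n k = (n div 2 ^ k) mod 2"

text \<open>Generating matrices, indices i,k \<ge> 1.\<close>
definition C1 :: "nat \<Rightarrow> nat \<Rightarrow> nat" where
  "C1 i k = (if i = k then 1 else 0)"

definition C2 :: "nat \<Rightarrow> nat \<Rightarrow> nat" where
  "C2 i k = ((k - 1) choose (i - 1)) mod 2"

text \<open>The k-th digit (k \<ge> 1) of coordinate given by matrix C: (C (n_0,n_1,...)^T)_i mod 2.
  Since digit n (k-1) = 0 for k > n, the sum over k \<in> {1..n} is the full (finite-support) sum.\<close>
definition sobol_digit :: "(nat \<Rightarrow> nat \<Rightarrow> nat) \<Rightarrow> nat \<Rightarrow> nat \<Rightarrow> nat" where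
  "sobol_digit C n i = (\<Sum>k\<in>{1..n}. C i k * digit n (k - 1)) mod 2"

definition sobol_coord :: "(nat \<Rightarrow> nat \<Rightarrow> nat) \<Rightarrow> nat \<Rightarrow> real" where
  "sobol_coord C n = (\<Sum>i. real (sobol_digit C n (Suc i)) / 2 ^ (Suc i))"

definition sobol :: "nat \<Rightarrow> real \<times> real" where
  "sobol n = (sobol_coord C1 n, sobol_coord C2 n)"

definition sep_radius :: "nat \<Rightarrow> real" where
  "sep_radius n = Min {dist (sobol i) (sobol j) | i j. i < j \<and> j < n} / 2"

end

(*
  Both generating matrices are upper unitriangular over GF(2), so n \<mapsto> (first m Sobol' digits
  of n) is injective on {0, ..., 2^m - 1}: look at the highest binary digit in which two
  indices differ. Hence each coordinate of the first 2^m points is a distinct multiple of 2^-m,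
  and any two of these points are at distance at least sqrt 2 * 2^-m.

  The bound is attained by x_1 = (1/2, 1/2) and x_(2^m - 2). The binary digits of 2^m - 2 are
  0, 1, ..., 1, so its i-th Sobol' digit is the i-th row sum of the generating matrix minus the
  first entry of that row. For the Pascal matrix this row sum is (m choose i) by the hockey-stick
  identity, and it is odd for all i \<le> m because m = 2^w - 1. So both coordinates of
  x_(2^m - 2) equal 1/2 - 2^-m.
*)
theory Submission
  imports Defs
begin

lemma digit_le_1: "digit n k \<le> 1"
  unfolding digit_def by simp

lemma digit_eq_of_bool_bit: "digit n k = of_bool (bit n k)"
  unfolding digit_def bit_iff_odd by (simp add: odd_iff_mod_2_eq_one)

lemma digit_eq_0_if_less_power:
  assumes "n < 2 ^ m" "m \<le> k"
  shows "digit n k = 0"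
proof -
  have "n < 2 ^ k"
    using assms order.strict_trans2 power_increasing by fastforce
  then show ?thesis
    unfolding digit_def by simp
qed

lemma digit_eqI:
  assumes "\<And>k. digit a k = digit b k"
  shows "a = b"
  using assms unfolding digit_eq_of_bool_bit of_bool_eq_iff by (rule bit_eqI)

lemma digit_binary_sum:
  assumes "\<And>j. j < m \<Longrightarrow> e j \<le> (1::nat)" "k < m"
  shows "digit (\<Sum>j<m. e j * 2 ^ j) k = e k"
proof -
  have "of_bool (e j = 1) = e j" if "j < m" for j
    using assms(1)[OF that] by auto
  then have "(\<Sum>j<m. e j * 2 ^ j) = horner_sum of_bool 2 (map (\<lambda>j. e j = 1) [0..<m])"
    by (simp add: horner_sum_eq_sum atLeast0LessThan)
  then show ?thesis
    using assms(2) assms(1)[OF assms(2)] by (auto simp: digit_eq_of_bool_bit bit_horner_sum_bit_iff)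
qed

lemma digit_power2_minus_2: "digit (2 ^ m - 2) j = of_bool (0 < j \<and> j < m)"
proof -
  have "(2::nat) ^ m - 2 = 2 * mask (m - 1)"
    by (cases m) (simp_all add: mask_eq_exp_minus_1 algebra_simps)
  then show ?thesis
    by (auto simp: digit_eq_of_bool_bit bit_double_iff bit_mask_iff)
qed

lemma sum_inverse_powers_2: "(\<Sum>i=1..m. 1 / 2 ^ i :: real) = 1 - 1 / 2 ^ m"
  by (induction m) (simp_all add: atLeastAtMostSuc_conv field_simps)

lemma sum_choose_lessThan: "(\<Sum>k<m. k choose r) = m choose Suc r"
  by (cases m) (simp_all add: lessThan_Suc_atMost sum_choose_upper)

lemma even_choose_power2:
  assumes "0 < k" "k < 2 ^ w"
  shows "even ((2::nat) ^ w choose k)"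
proof (rule ccontr)
  assume odd: "odd ((2::nat) ^ w choose k)"
  obtain k' where k: "k = Suc k'" using assms(1) by (cases k) auto
  obtain N where N: "(2::nat) ^ w = Suc N" using not0_implies_Suc by force
  have "k * (2 ^ w choose k) = 2 ^ w * (N choose k')"
    using Suc_times_binomial[of k' N] k N by simp
  then have "(2::nat) ^ w dvd k * (2 ^ w choose k)" by simp
  moreover have "coprime ((2::nat) ^ w) (2 ^ w choose k)" using odd by simp
  ultimately have "(2::nat) ^ w dvd k" using coprime_dvd_mult_left_iff by blast
  then show False using assms by (simp add: nat_dvd_not_less)
qed

lemma odd_choose_power2_minus_1:
  assumes "k \<le> 2 ^ w - 1"
  shows "odd (((2::nat) ^ w - 1) choose k)"
  using assms
proof (induction k)
  case 0
  then show ?case by simp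
next
  case (Suc k)
  obtain N where N: "(2::nat) ^ w = Suc N" using not0_implies_Suc by force
  have "even (Suc N choose Suc k)" using even_choose_power2[of "Suc k" w] Suc.prems N by simp
  moreover have "odd (N choose k)" using Suc N by simp
  ultimately show ?case using N by simp
qed

definition upper_triangular :: "(nat \<Rightarrow> nat \<Rightarrow> nat) \<Rightarrow> bool" where
  "upper_triangular C \<longleftrightarrow> (\<forall>i k. 0 < k \<longrightarrow> k < i \<longrightarrow> C i k = 0)"

definition unitriangular :: "(nat \<Rightarrow> nat \<Rightarrow> nat) \<Rightarrow> bool" where
  "unitriangular C \<longleftrightarrow> upper_triangular C \<and> (\<forall>i>0. C i i = 1)"

lemma unitriangular_C1: "unitriangular C1"
  by (simp add: unitriangular_def upper_triangular_def C1_def)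

lemma unitriangular_C2: "unitriangular C2"
  by (auto simp: unitriangular_def upper_triangular_def C2_def binomial_eq_0)

lemma sobol_digit_eq_sum_upto:
  assumes "n < 2 ^ m"
  shows "sobol_digit C n i = (\<Sum>k=1..m. C i k * digit n (k - 1)) mod 2"
proof -
  have "n < 2 ^ n" by simp
  then have "(\<Sum>k=1..n. C i k * digit n (k - 1)) = (\<Sum>k=1..max n m. C i k * digit n (k - 1))"
    by (intro sum.mono_neutral_left) (auto simp: digit_eq_0_if_less_power[of n n])
  also have "\<dots> = (\<Sum>k=1..m. C i k * digit n (k - 1))"
    using assms by (intro sum.mono_neutral_right) (auto simp: digit_eq_0_if_less_power)
  finally show ?thesis
    unfolding sobol_digit_def by simp
qed

lemma sobol_digit_eq_0:
  assumes "upper_triangular C" "n < 2 ^ m" "m < i"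
  shows "sobol_digit C n i = 0"
  using assms unfolding sobol_digit_eq_sum_upto[OF assms(2)] upper_triangular_def by simp

lemma sobol_coord_eq_sum:
  assumes "upper_triangular C" "n < 2 ^ m"
  shows "sobol_coord C n = (\<Sum>i=1..m. sobol_digit C n i / 2 ^ i)"
proof -
  have "(\<lambda>i. sobol_digit C n (Suc i) / 2 ^ Suc i) sums (\<Sum>i<m. sobol_digit C n (Suc i) / 2 ^ Suc i)"
    using assms by (intro sums_finite) (auto simp: sobol_digit_eq_0)
  then show ?thesis
    unfolding sobol_coord_def by (simp add: sums_iff sum.atLeast1_atMost_eq)
qed

lemma sobol_digit_unitriangular:
  assumes "unitriangular C" "n < 2 ^ m" "i \<in> {1..m}"
  shows "sobol_digit C n i = (digit n (i - 1) + (\<Sum>k\<in>{i<..m}. C i k * digit n (k - 1))) mod 2"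
proof -
  have "(\<Sum>k=1..m. C i k * digit n (k - 1)) = (\<Sum>k=i..m. C i k * digit n (k - 1))"
    using assms(1,3) by (intro sum.mono_neutral_right) (auto simp: unitriangular_def upper_triangular_def)
  also have "\<dots> = digit n (i - 1) + (\<Sum>k\<in>{i<..m}. C i k * digit n (k - 1))"
    using assms(1,3) by (simp add: sum.head unitriangular_def)
  finally show ?thesis
    unfolding sobol_digit_eq_sum_upto[OF assms(2)] by simp
qed

lemma sobol_digit_differs_at_top_bit:
  assumes "unitriangular C" "a < 2 ^ m" "b < 2 ^ m"
    and "t < m" "digit a t \<noteq> digit b t" "\<And>k. t < k \<Longrightarrow> digit a k = digit b k"
  shows "sobol_digit C a (Suc t) \<noteq> sobol_digit C b (Suc t)"
proof -
  have "(\<Sum>k\<in>{Suc t<..m}. C (Suc t) k * digit a (k - 1)) = (\<Sum>k\<in>{Suc t<..m}. C (Suc t) k * digit b (k - 1))"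
    using assms(6) by (intro sum.cong) auto
  moreover have "(x + s) mod 2 \<noteq> (y + s) mod 2" if "x \<noteq> y" "x \<le> 1" "y \<le> (1::nat)" for x y s
    using that by presburger
  ultimately show ?thesis
    using assms digit_le_1 by (simp add: sobol_digit_unitriangular)
qed

lemma sobol_digits_neqE:
  assumes "unitriangular C" "a < 2 ^ m" "b < 2 ^ m" "a \<noteq> b"
  obtains i where "i \<in> {1..m}" "sobol_digit C a i \<noteq> sobol_digit C b i"
proof -
  define D where "D = {k. digit a k \<noteq> digit b k}"
  have "D \<noteq> {}"
    using assms(4) digit_eqI unfolding D_def by blast
  moreover have "D \<subseteq> {..<m}"
  proof
    fix k assume "k \<in> D"
    then show "k \<in> {..<m}"
      using digit_eq_0_if_less_power[OF assms(2), of k] digit_eq_0_if_less_power[OF assms(3), of k]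
      by (cases "m \<le> k") (auto simp: D_def)
  qed
  then have "finite D"
    by (rule finite_subset) simp
  ultimately obtain t where t: "t \<in> D" and top: "\<And>k. k \<in> D \<Longrightarrow> k \<le> t"
    using Max_in Max_ge by blast
  have "t < m"
    using t \<open>D \<subseteq> {..<m}\<close> by blast
  moreover have "digit a t \<noteq> digit b t" "\<And>k. t < k \<Longrightarrow> digit a k = digit b k"
    using t top unfolding D_def by force+
  ultimately show ?thesis
    using that sobol_digit_differs_at_top_bit[OF assms(1-3)] by force
qed

definition sobol_numerator :: "(nat \<Rightarrow> nat \<Rightarrow> nat) \<Rightarrow> nat \<Rightarrow> nat \<Rightarrow> nat" where
  "sobol_numerator C m n = (\<Sum>j<m. sobol_digit C n (m - j) * 2 ^ j)"

lemma sobol_coord_eq_numerator: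
  assumes "upper_triangular C" "n < 2 ^ m"
  shows "sobol_coord C n = sobol_numerator C m n / 2 ^ m"
proof -
  have scale: "real x / 2 ^ Suc i = real (x * 2 ^ (m - Suc i)) / 2 ^ m" if "i < m" for x i
  proof -
    have "(2::real) ^ m = 2 ^ (m - Suc i) * 2 ^ Suc i"
      using that by (subst power_add[symmetric]) simp
    then show ?thesis by simp
  qed
  have "sobol_coord C n = (\<Sum>i<m. real (sobol_digit C n (Suc i)) / 2 ^ Suc i)"
    using sobol_coord_eq_sum[OF assms] by (simp add: sum.atLeast1_atMost_eq)
  also have "\<dots> = (\<Sum>i<m. real (sobol_digit C n (Suc i) * 2 ^ (m - Suc i)) / 2 ^ m)"
    using scale by (intro sum.cong) simp_all
  also have "\<dots> = sobol_numerator C m n / 2 ^ m"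
    unfolding sobol_numerator_def sum_divide_distrib[symmetric]
    by (subst sum.nat_diff_reindex[symmetric]) (simp add: Suc_diff_Suc)
  finally show ?thesis .
qed

lemma digit_sobol_numerator:
  assumes "i \<in> {1..m}"
  shows "digit (sobol_numerator C m n) (m - i) = sobol_digit C n i"
proof -
  have "sobol_digit C n (m - j) \<le> 1" for j
    unfolding sobol_digit_def by simp
  then show ?thesis
    unfolding sobol_numerator_def using assms by (subst digit_binary_sum) auto
qed

lemma sobol_coord_separated:
  assumes "unitriangular C" "a < 2 ^ m" "b < 2 ^ m" "a \<noteq> b"
  shows "1 / 2 ^ m \<le> \<bar>sobol_coord C a - sobol_coord C b\<bar>"
proof -
  obtain i where "i \<in> {1..m}" "sobol_digit C a i \<noteq> sobol_digit C b i"
    using sobol_digits_neqE[OF assms] .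
  then have "digit (sobol_numerator C m a) (m - i) \<noteq> digit (sobol_numerator C m b) (m - i)"
    by (simp add: digit_sobol_numerator)
  then have "sobol_numerator C m a \<noteq> sobol_numerator C m b"
    by auto
  then have "1 \<le> \<bar>real (sobol_numerator C m a) - sobol_numerator C m b\<bar>"
    by linarith
  then have "1 / 2 ^ m \<le> \<bar>real (sobol_numerator C m a) - sobol_numerator C m b\<bar> / 2 ^ m"
    by (simp add: divide_right_mono)
  moreover have "upper_triangular C"
    using assms(1) unitriangular_def by blast
  ultimately show ?thesis
    using assms(2,3) by (simp add: sobol_coord_eq_numerator flip: diff_divide_distrib)
qed

lemma dist_sobol_ge:
  assumes "a < 2 ^ m" "b < 2 ^ m" "a \<noteq> b"
  shows "sqrt 2 / 2 ^ m \<le> dist (sobol a) (sobol b)"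
proof -
  let ?dx = "sobol_coord C1 a - sobol_coord C1 b" and ?dy = "sobol_coord C2 a - sobol_coord C2 b"
  have "(1 / 2 ^ m)\<^sup>2 \<le> ?dx\<^sup>2" "(1 / 2 ^ m)\<^sup>2 \<le> ?dy\<^sup>2"
    using sobol_coord_separated[OF unitriangular_C1 assms] sobol_coord_separated[OF unitriangular_C2 assms]
    by (simp_all flip: abs_le_square_iff)
  then have "sqrt (2 * (1 / 2 ^ m)\<^sup>2) \<le> sqrt (?dx\<^sup>2 + ?dy\<^sup>2)"
    by simp
  moreover have "sqrt (2 * (1 / 2 ^ m)\<^sup>2) = sqrt 2 / 2 ^ m"
    by (simp add: real_sqrt_mult power_divide real_sqrt_divide)
  ultimately show ?thesis
    by (simp add: sobol_def dist_Pair_Pair dist_real_def)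
qed

lemma sobol_coord_one:
  assumes "unitriangular C"
  shows "sobol_coord C 1 = 1 / 2"
proof -
  have "upper_triangular C" "C 1 1 = 1"
    using assms by (simp_all add: unitriangular_def)
  moreover have "sobol_digit C 1 1 = C 1 1 mod 2"
    using sobol_digit_eq_sum_upto[of 1 1] by (simp add: digit_def)
  ultimately show ?thesis
    using sobol_coord_eq_sum[of C 1 1] by simp
qed

lemma sobol_digit_power2_minus_2:
  assumes "unitriangular C" "i \<in> {1..m}" "odd (\<Sum>k=1..m. C i k)"
  shows "sobol_digit C (2 ^ m - 2) i = of_bool (2 \<le> i)"
proof -
  let ?T = "\<Sum>k\<in>{1<..m}. C i k"
  have "(\<Sum>k=1..m. C i k * digit (2 ^ m - 2) (k - 1)) = (\<Sum>k=1..m. C i k * of_bool (1 < k))"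
    by (intro sum.cong) (auto simp: digit_power2_minus_2)
  also have "\<dots> = ?T"
    using assms(2) by (subst sum.head) (auto intro!: sum.cong)
  finally have digit: "sobol_digit C (2 ^ m - 2) i = ?T mod 2"
    by (simp add: sobol_digit_eq_sum_upto[of _ m])
  have "C i 1 = of_bool (i = 1)"
    using assms(1,2) by (auto simp: unitriangular_def upper_triangular_def)
  moreover have "odd (C i 1 + ?T)"
    using assms(2,3) by (simp add: sum.head)
  ultimately show ?thesis
    unfolding digit using assms(2) by (cases "i = 1") (auto simp: odd_iff_mod_2_eq_one)
qed

lemma sobol_coord_power2_minus_2:
  assumes "unitriangular C" "0 < m" "\<And>i. i \<in> {1..m} \<Longrightarrow> odd (\<Sum>k=1..m. C i k)"
  shows "sobol_coord C (2 ^ m - 2) = 1 / 2 - 1 / 2 ^ m"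
proof -
  have "upper_triangular C"
    using assms(1) by (simp add: unitriangular_def)
  then have "sobol_coord C (2 ^ m - 2) = (\<Sum>i=1..m. sobol_digit C (2 ^ m - 2) i / 2 ^ i)"
    by (rule sobol_coord_eq_sum) simp
  also have "\<dots> = (\<Sum>i=1..m. of_bool (2 \<le> i) / 2 ^ i)"
    using sobol_digit_power2_minus_2[OF assms(1) _ assms(3)] by (intro sum.cong) auto
  also have "\<dots> = (\<Sum>i=1..m. 1 / 2 ^ i) - 1 / 2"
    using assms(2) by (simp add: sum.head)
  finally show ?thesis
    unfolding sum_inverse_powers_2 by simp
qed

lemma odd_row_sum_C1:
  assumes "i \<in> {1..m}"
  shows "odd (\<Sum>k=1..m. C1 i k)"
  using assms by (simp add: C1_def sum.delta)

lemma odd_row_sum_C2: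
  assumes "m = 2 ^ w - 1" "i \<in> {1..m}"
  shows "odd (\<Sum>k=1..m. C2 i k)"
proof -
  have "(\<Sum>k=1..m. (k - 1) choose (i - 1)) = m choose i"
    using assms(2) by (simp add: sum.atLeast1_atMost_eq sum_choose_lessThan)
  moreover have "odd (m choose i)"
    using assms odd_choose_power2_minus_1 by simp
  ultimately show ?thesis
    unfolding C2_def by (metis mod_sum_eq odd_iff_mod_2_eq_one)
qed

lemma sep_radius_eqI:
  assumes "\<And>i j. i < j \<Longrightarrow> j < n \<Longrightarrow> d \<le> dist (sobol i) (sobol j)"
    and "i < j" "j < n" "dist (sobol i) (sobol j) = d"
  shows "sep_radius n = d / 2"
proof -
  let ?A = "{dist (sobol i) (sobol j) | i j. i < j \<and> j < n}"
  have "?A \<subseteq> (\<lambda>(i, j). dist (sobol i) (sobol j)) ` ({..<n} \<times> {..<n})"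
    by auto
  then have "finite ?A"
    by (rule finite_subset) simp
  moreover have "d \<in> ?A"
    using assms(2-4) by blast
  ultimately have "Min ?A = d"
    using assms(1) by (intro Min_eqI) auto
  then show ?thesis
    unfolding sep_radius_def by simp
qed

theorem mainTheorem1:
  fixes w m n :: nat
  assumes "w > 1" and "m = 2 ^ w - 1" and "n = 2 ^ m - 1"
  shows "sep_radius n = 1 / (sqrt 2 * real (n + 1))"
proof -
  have "(2::nat) ^ 2 \<le> 2 ^ w"
    using assms(1) by (intro power_increasing) auto
  then have "3 \<le> m"
    using assms(2) by simp
  then have "(2::nat) ^ 3 \<le> 2 ^ m"
    by (intro power_increasing) auto
  then have indices: "1 < (2::nat) ^ m - 2" "2 ^ m - 2 < n"
    using assms(3) by auto
  have "sobol 1 = (1 / 2, 1 / 2)"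
    using sobol_coord_one[OF unitriangular_C1] sobol_coord_one[OF unitriangular_C2]
    by (simp add: sobol_def)
  moreover have "sobol (2 ^ m - 2) = (1 / 2 - 1 / 2 ^ m, 1 / 2 - 1 / 2 ^ m)"
    using \<open>3 \<le> m\<close> sobol_coord_power2_minus_2[OF unitriangular_C1 _ odd_row_sum_C1]
      sobol_coord_power2_minus_2[OF unitriangular_C2 _ odd_row_sum_C2[OF assms(2)]]
    by (simp add: sobol_def)
  ultimately have "dist (sobol 1) (sobol (2 ^ m - 2)) = sqrt 2 / 2 ^ m"
    by (simp add: dist_Pair_Pair dist_real_def real_sqrt_mult power_divide real_sqrt_divide)
  then have "sep_radius n = sqrt 2 / 2 ^ m / 2"
    using indices assms(3) dist_sobol_ge by (intro sep_radius_eqI) auto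
  moreover have "real (n + 1) = 2 ^ m"
    using assms(3) by simp
  moreover have "sqrt 2 / 2 ^ m / 2 = 1 / (sqrt 2 * (2::real) ^ m)"
    by (simp add: divide_simps)
  ultimately show ?thesis
    by simp
qed

end
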